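(* There is a numerical constant $C>0$ with the following property. Let $f$ be holomorphic on $\mathbb{D}$ and $\alpha\in\mathbb{R}$ be such that $\operatorname{Im} f(0)<\alpha$ and $$f(\mathbb{D})\subseteq\{z\in\mathbb{C}\,;\ 0<\operatorname{Re}z<\pi\}\cup\{z\in\mathbb{C}\,;\ \operatorname{Im}z<\alpha\}.$$ Then for every $y\ge\alpha$, $$m\big(\{\xi\in\mathbb{T}\,;\ \operatorname{Im}f^*(\xi)>y\}\big)\le Ce^{\alpha-y}.$$
   Context: $m$ is the normalized Lebesgue measure on $\mathbb{T}=\partial\mathbb{D}$, and $f^*(\xi)=\lim_{r\to1^-}f(r\xi)$ denotes the radial limit of $f$ at $\xi$ (the set in question consists of those $\xi$ where this limit exists and has imaginary part $>y$). *)

theory Defs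
  imports "HOL-Analysis.Analysis"
begin

definition has_radial_limit :: "(complex \<Rightarrow> complex) \<Rightarrow> real \<Rightarrow> complex \<Rightarrow> bool" where
  "has_radial_limit f t L \<longleftrightarrow> ((\<lambda>r::real. f (complex_of_real r * cis t)) \<longlongrightarrow> L) (at_left 1)"

definition radial_sup_set :: "(complex \<Rightarrow> complex) \<Rightarrow> real \<Rightarrow> real set" where
  "radial_sup_set f y = {t \<in> {0..<2*pi}. \<exists>L. has_radial_limit f t L \<and> Im L > y}"

text \<open>Normalized Lebesgue measure m on the unit circle, via t \<mapsto> cis t on [0,2pi).\<close>
definition circle_measure :: "real set \<Rightarrow> real" where
  "circle_measure A = measure lebesgue A / (2*pi)"

end

theory Submission
  imports Defs "HOL-Complex_Analysis.Complex_Analysis"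
begin

text \<open>Put R = exp y and \<zeta> = exp (-i u). The harmonic function
  h(u) = - Arg ((R + \<zeta>) / (R - \<zeta>)) / \<pi> is positive on the strip 0 < Re u < \<pi>, which \<zeta>
  maps into the lower half-plane, and exceeds 1/2 there once Im u > y, i.e. |\<zeta>| > R. On the
  half-plane Im u < \<alpha> we have |\<zeta>| < exp \<alpha> \<le> R / e, so |h| \<le> 2 exp (\<alpha> - y). Hence
  h \<circ> f + 2 exp (\<alpha> - y) is a nonnegative harmonic function on the disc with value at most
  4 exp (\<alpha> - y) at the origin. By the mean value property and Markov's inequality, on every
  circle |z| = r the set where it is \<ge> 1/2 has measure at most 16 \<pi> exp (\<alpha> - y), and a
  boundary point where Im f* > y lies in these sets for all r close to 1, so the bound passes
  to the boundary. For y < \<alpha> + 1 the trivial bound m \<le> 1 suffices.\<close>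

definition cayley :: "real \<Rightarrow> complex \<Rightarrow> complex" where
  "cayley R z = (of_real R + z) / (of_real R - z)"

lemma Re_cayley:
  "z \<noteq> of_real R \<Longrightarrow> Re (cayley R z) = (R\<^sup>2 - (cmod z)\<^sup>2) / (cmod (of_real R - z))\<^sup>2"
  unfolding cayley_def cmod_power2 by (simp add: Re_divide power2_eq_square algebra_simps)

lemma Im_cayley:
  "z \<noteq> of_real R \<Longrightarrow> Im (cayley R z) = 2 * R * Im z / (cmod (of_real R - z))\<^sup>2"
  unfolding cayley_def cmod_power2 by (simp add: Im_divide power2_eq_square algebra_simps)

lemma cayley_inside_disc:
  assumes R: "R > 0" and z: "cmod z < R"
  shows "0 < Re (cayley R z)"
    and "\<bar>Im (Ln (cayley R z))\<bar> \<le> 2 * R * cmod z / (R\<^sup>2 - (cmod z)\<^sup>2)"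
proof -
  have ne: "z \<noteq> of_real R" using z by auto
  have d: "(cmod (of_real R - z))\<^sup>2 > 0" using ne by auto
  have s: "R\<^sup>2 - (cmod z)\<^sup>2 > 0" using z by (simp add: power_strict_mono)
  show re: "0 < Re (cayley R z)"
    using Re_cayley[OF ne] d s by simp
  have "\<bar>Im (Ln (cayley R z))\<bar> = \<bar>arctan (Im (cayley R z) / Re (cayley R z))\<bar>"
    using re by (metis Arg_eq_Im_Ln arg_conv_arctan order_less_irrefl zero_complex.simps(1))
  also have "\<dots> \<le> \<bar>Im (cayley R z) / Re (cayley R z)\<bar>"
    by (rule abs_arctan_le)
  also have "\<dots> = 2 * R * \<bar>Im z\<bar> / (R\<^sup>2 - (cmod z)\<^sup>2)"
    using d s R by (simp add: Re_cayley[OF ne] Im_cayley[OF ne] abs_mult abs_of_pos[OF s])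
  also have "\<dots> \<le> 2 * R * cmod z / (R\<^sup>2 - (cmod z)\<^sup>2)"
    using s R z abs_Im_le_cmod[of z] by (intro divide_right_mono mult_left_mono) auto
  finally show "\<bar>Im (Ln (cayley R z))\<bar> \<le> 2 * R * cmod z / (R\<^sup>2 - (cmod z)\<^sup>2)" .
qed

lemma cayley_lower_half_plane:
  assumes R: "R > 0" and z: "Im z < 0"
  shows "Im (cayley R z) < 0"
    and "Im (Ln (cayley R z)) < 0"
    and "cmod z > R \<Longrightarrow> Im (Ln (cayley R z)) < - pi / 2"
proof -
  have ne: "z \<noteq> of_real R" using z by auto
  have d: "(cmod (of_real R - z))\<^sup>2 > 0" using ne by auto
  show im: "Im (cayley R z) < 0"
    using Im_cayley[OF ne] d R z by (simp add: divide_neg_pos mult_pos_neg)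
  then have w0: "cayley R z \<noteq> 0" by auto
  show neg: "Im (Ln (cayley R z)) < 0"
    using Im_Ln_pos_le[OF w0] im mpi_less_Im_Ln[of "cayley R z"] Im_Ln_le_pi[OF w0] by linarith
  assume "cmod z > R"
  then have "(cmod z)\<^sup>2 > R\<^sup>2" using R by (simp add: power_strict_mono)
  then have "Re (cayley R z) < 0" using Re_cayley[OF ne] d by (simp add: divide_neg_pos)
  then have "\<bar>Im (Ln (cayley R z))\<bar> > pi / 2" using Re_Ln_pos_le[OF w0] by linarith
  with neg show "Im (Ln (cayley R z)) < - pi / 2" by linarith
qed

definition strip_weight :: "real \<Rightarrow> complex \<Rightarrow> real" where
  "strip_weight y u = - Im (Ln (cayley (exp y) (exp (- (\<i> * u))))) / pi"

lemma norm_exp_minus_i_mult: "cmod (exp (- (\<i> * u))) = exp (Im u)"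
  by (simp add: norm_exp_eq_Re)

lemma Im_exp_minus_i_mult_neg: "0 < Re u \<Longrightarrow> Re u < pi \<Longrightarrow> Im (exp (- (\<i> * u))) < 0"
  by (simp add: Im_exp sin_gt_zero)

lemma strip_weight_below:
  assumes y: "\<alpha> + 1 \<le> y" and u: "Im u < \<alpha>"
  shows "0 < Re (cayley (exp y) (exp (- (\<i> * u))))"
    and "\<bar>strip_weight y u\<bar> \<le> 2 * exp (\<alpha> - y)"
proof -
  define R where "R = exp y"
  define a where "a = exp \<alpha>"
  define s where "s = exp (Im u)"
  have pos: "R > 0" "a > 0" "s > 0" unfolding R_def a_def s_def by auto
  have sa: "s < a" unfolding s_def a_def using u by simp
  have "2 * a \<le> exp 1 * a" using exp_ge_add_one_self[of 1] pos by simp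
  also have "\<dots> \<le> R" unfolding R_def a_def using y by (simp flip: exp_add)
  finally have Ra: "2 * a \<le> R" .
  have zR: "cmod (exp (- (\<i> * u))) < R"
    unfolding norm_exp_minus_i_mult s_def[symmetric] using sa Ra pos by linarith
  show "0 < Re (cayley (exp y) (exp (- (\<i> * u))))"
    using cayley_inside_disc(1)[OF pos(1) zR] unfolding R_def .
  have "\<bar>Im (Ln (cayley R (exp (- (\<i> * u)))))\<bar> \<le> 2 * R * s / (R\<^sup>2 - s\<^sup>2)"
    using cayley_inside_disc(2)[OF pos(1) zR] unfolding norm_exp_minus_i_mult s_def .
  also have "\<dots> \<le> 4 * a / R"
  proof -
    have "s * s \<le> a * a" "(2 * a) * (2 * a) \<le> R * R"
      using sa mult_mono[OF Ra Ra] pos by (simp_all add: mult_mono)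
    then have s2: "2 * s\<^sup>2 \<le> R\<^sup>2" and "R\<^sup>2 - s\<^sup>2 > 0"
      using mult_pos_pos[OF pos(2) pos(2)] by (simp_all add: power2_eq_square)
    moreover have "2 * R\<^sup>2 * s + 2 * a * (2 * s\<^sup>2) \<le> 2 * R\<^sup>2 * a + 2 * a * R\<^sup>2"
      using sa pos s2 by (intro add_mono mult_left_mono) auto
    ultimately show ?thesis using pos by (simp add: field_simps power2_eq_square)
  qed
  also have "\<dots> \<le> 2 * pi * (a / R)" using pi_gt3 pos by (simp add: field_simps)
  finally have "\<bar>strip_weight y u\<bar> \<le> 2 * (a / R)"
    unfolding strip_weight_def R_def[symmetric] using pi_gt_zero by (simp add: field_simps)
  then show "\<bar>strip_weight y u\<bar> \<le> 2 * exp (\<alpha> - y)"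
    unfolding a_def R_def by (simp add: exp_diff)
qed

lemma strip_weight_strip:
  assumes "0 < Re u" "Re u < pi"
  shows "Im (cayley (exp y) (exp (- (\<i> * u)))) < 0" and "0 < strip_weight y u"
    and "y < Im u \<Longrightarrow> 1/2 < strip_weight y u"
proof -
  have R: "exp y > 0" by simp
  have z: "Im (exp (- (\<i> * u))) < 0" using Im_exp_minus_i_mult_neg assms by blast
  show "Im (cayley (exp y) (exp (- (\<i> * u)))) < 0" by (rule cayley_lower_half_plane(1)[OF R z])
  show "0 < strip_weight y u"
    unfolding strip_weight_def using cayley_lower_half_plane(2)[OF R z] by (simp add: divide_neg_pos)
  assume "y < Im u"
  then have "cmod (exp (- (\<i> * u))) > exp y" unfolding norm_exp_minus_i_mult by simp
  from cayley_lower_half_plane(3)[OF R z this] show "1/2 < strip_weight y u"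
    unfolding strip_weight_def using pi_gt_zero by (simp add: field_simps)
qed

lemma mean_value_circle:
  fixes G :: "complex \<Rightarrow> complex"
  assumes hol: "G holomorphic_on ball 0 1" and r: "0 < r" "r < 1"
  shows "((\<lambda>t. G (of_real r * cis t)) has_integral 2 * pi * G 0) {0..2*pi}"
proof -
  have sub: "cball 0 r \<subseteq> ball (0::complex) 1" using r by auto
  have "((\<lambda>u. G u / (u - 0)) has_contour_integral (2 * of_real pi * \<i> * G 0)) (circlepath 0 r)"
    using r holomorphic_on_subset[OF hol sub] ball_subset_cball
    by (intro Cauchy_integral_circlepath holomorphic_on_imp_continuous_on)
       (auto intro: holomorphic_on_subset)
  then have "((\<lambda>t. G (0 + r * cis t) / (0 + r * cis t - 0) * r * \<i> * cis t)
      has_integral (2 * of_real pi * \<i> * G 0)) {0..2*pi}"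
    unfolding circlepath_def by (subst (asm) has_contour_integral_part_circlepath_iff) auto
  also have "(\<lambda>t. G (0 + r * cis t) / (0 + r * cis t - 0) * r * \<i> * cis t)
      = (\<lambda>t. \<i> * G (of_real r * cis t))"
    using r by (intro ext) (simp add: field_simps)
  finally have "((\<lambda>t. \<i> * G (of_real r * cis t)) has_integral 2 * of_real pi * \<i> * G 0) {0..2*pi}" .
  from has_integral_mult_right[OF this, of "-\<i>"]
  have "((\<lambda>t. G (of_real r * cis t)) has_integral - (\<i> * (2 * of_real pi * \<i> * G 0))) {0..2*pi}"
    by simp
  also have "- (\<i> * (2 * of_real pi * \<i> * G 0)) = 2 * pi * G 0"
    by (simp add: algebra_simps)
  finally show ?thesis .
qed

lemma measure_superlevel_le_integral:
  fixes \<phi> :: "real \<Rightarrow> real"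
  assumes cont: "continuous_on {a..b} \<phi>" and int: "(\<phi> has_integral I) {a..b}"
    and nonneg: "\<And>t. t \<in> {a..b} \<Longrightarrow> 0 \<le> \<phi> t" and e: "0 < e"
  shows "{t\<in>{a..b}. e \<le> \<phi> t} \<in> lmeasurable"
    and "e * measure lebesgue {t\<in>{a..b}. e \<le> \<phi> t} \<le> I"
proof -
  define S where "S = {t\<in>{a..b}. e \<le> \<phi> t}"
  have S_ab: "S \<subseteq> {a..b}" unfolding S_def by auto
  have "closed S"
    using continuous_closed_preimage[OF cont closed_atLeastAtMost closed_atLeast, of e]
    by (simp add: S_def vimage_def Int_def)
  then have "compact S"
    using compact_Int_closed[OF compact_Icc, of S a b] S_ab by (simp add: Int_absorb1)
  then show S: "{t\<in>{a..b}. e \<le> \<phi> t} \<in> lmeasurable"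
    unfolding S_def[symmetric] by (rule lmeasurable_compact)
  then have "(indicator S has_integral measure lebesgue S) UNIV"
    unfolding S_def[symmetric] lmeasurable_iff_has_integral .
  moreover have "(\<lambda>t. if t \<in> {a..b} then indicator S t else 0) = (indicator S :: real \<Rightarrow> real)"
    using S_ab by (auto simp: indicator_def intro!: ext)
  ultimately have "(indicator S has_integral measure lebesgue S) {a..b}"
    using has_integral_restrict_UNIV[of "{a..b}" "indicator S :: real \<Rightarrow> real"] by simp
  then have "((\<lambda>t. e * indicator S t) has_integral e * measure lebesgue S) {a..b}"
    by (rule has_integral_mult_right)
  then show "e * measure lebesgue {t\<in>{a..b}. e \<le> \<phi> t} \<le> I"
    unfolding S_def[symmetric]
    by (rule has_integral_le[OF _ int]) (use nonneg e in \<open>auto simp: S_def indicator_def\<close>)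
qed

lemma circle_superlevel_measure_le:
  fixes G :: "complex \<Rightarrow> complex"
  assumes hol: "G holomorphic_on ball 0 1" and r: "0 < r" "r < 1"
    and nonneg: "\<And>t. 0 \<le> Re (G (of_real r * cis t))" and e: "0 < e"
  shows "{t\<in>{0..2*pi}. e \<le> Re (G (of_real r * cis t))} \<in> lmeasurable"
    and "e * measure lebesgue {t\<in>{0..2*pi}. e \<le> Re (G (of_real r * cis t))} \<le> 2 * pi * Re (G 0)"
proof -
  have "continuous_on UNIV (\<lambda>t. G (of_real r * cis t))"
    using r by (intro continuous_on_compose2[OF holomorphic_on_imp_continuous_on[OF hol]])
               (auto intro!: continuous_intros simp: norm_mult)
  then have "continuous_on {0..2*pi} (\<lambda>t. Re (G (of_real r * cis t)))"
    by (auto intro: continuous_on_Re continuous_on_subset)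
  moreover have "((\<lambda>t. Re (G (of_real r * cis t))) has_integral 2 * pi * Re (G 0)) {0..2*pi}"
    using has_integral_linear[OF mean_value_circle[OF hol r] bounded_linear_Re] by (simp add: o_def)
  ultimately show "{t\<in>{0..2*pi}. e \<le> Re (G (of_real r * cis t))} \<in> lmeasurable"
    and "e * measure lebesgue {t\<in>{0..2*pi}. e \<le> Re (G (of_real r * cis t))} \<le> 2 * pi * Re (G 0)"
    using measure_superlevel_le_integral nonneg e by blast+
qed

lemma measure_le_if_eventually_mem:
  assumes E: "E \<in> sets M" and S: "\<And>n. S n \<in> fmeasurable M"
    and bound: "\<And>n. measure M (S n) \<le> B"
    and ev: "\<And>x. x \<in> E \<Longrightarrow> eventually (\<lambda>n. x \<in> S n) sequentially"
  shows "measure M E \<le> B"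
proof -
  define A where "A n = E \<inter> (\<Inter>m\<in>{n..}. S m)" for n
  have A: "range A \<subseteq> sets M" "incseq A"
    using E S by (auto simp: A_def incseq_def intro!: sets.countable_INT')
  have "(\<Union>n. A n) = E"
    using ev by (fastforce simp: A_def eventually_sequentially)
  moreover have "emeasure M (A n) \<le> ennreal B" for n
  proof -
    have "emeasure M (A n) \<le> emeasure M (S n)"
      using A S by (intro emeasure_mono) (auto simp: A_def)
    also have "\<dots> \<le> ennreal B"
      using S bound by (simp add: emeasure_eq_measure2 ennreal_leI)
    finally show ?thesis .
  qed
  ultimately have "emeasure M E \<le> ennreal B"
    using SUP_emeasure_incseq[OF A] by (metis SUP_least)
  moreover have "0 \<le> B" using bound[of 0] measure_nonneg order_trans by blast
  ultimately show ?thesis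
    unfolding measure_def by (rule enn2real_leI[rotated])
qed

text \<open>The right-hand side quantifies only over countably many parameters, which is what makes
  the radial sets Lebesgue measurable.\<close>

lemma tendsto_at_left_one_Im_gt_iff:
  fixes g :: "real \<Rightarrow> complex"
  shows "(\<exists>L. (g \<longlongrightarrow> L) (at_left 1) \<and> y < Im L) \<longleftrightarrow>
    (\<exists>q\<in>\<rat>. y < q \<and> (\<forall>k. \<exists>n. \<forall>r\<in>{1 - 1 / Suc n<..<1}. \<forall>s\<in>{1 - 1 / Suc n<..<1}.
       dist (g r) (g s) \<le> 1 / Suc k \<and> q \<le> Im (g r)))"
    (is "?lim \<longleftrightarrow> (\<exists>q\<in>\<rat>. y < q \<and> (\<forall>k. \<exists>n. ?close q k n))")
proof
  assume ?lim
  then obtain L where lim: "(g \<longlongrightarrow> L) (at_left 1)" and L: "y < Im L" by blast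
  obtain q where q: "q \<in> \<rat>" "y < q" "q < Im L" using Rats_dense_in_real[OF L] by blast
  have "\<exists>n. ?close q k n" for k
  proof -
    have "eventually (\<lambda>r. dist (g r) L < 1 / (2 * Suc k) \<and> q < Im (g r)) (at_left 1)"
      using tendstoD[OF lim] order_tendstoD(1)[OF tendsto_Im[OF lim] q(3)]
      by (intro eventually_conj) auto
    then obtain b where "b < 1" and b: "\<And>r. b < r \<Longrightarrow> r < 1 \<Longrightarrow>
        dist (g r) L < 1 / (2 * Suc k) \<and> q < Im (g r)"
      by (subst (asm) eventually_at_left[of 0]) auto
    obtain n where n: "inverse (Suc n) < 1 - b" using reals_Archimedean[of "1 - b"] \<open>b < 1\<close> by auto
    have "?close q k n"
    proof (intro ballI conjI)
      fix r s assume "r \<in> {1 - 1 / Suc n<..<1}" "s \<in> {1 - 1 / Suc n<..<1}"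
      then have r: "b < r" "r < 1" and s: "b < s" "s < 1" using n by (auto simp: inverse_eq_divide)
      have "dist (g r) (g s) \<le> dist (g r) L + dist (g s) L"
        by (metis dist_triangle3 dist_commute)
      also have "\<dots> \<le> 1 / Suc k" using b[OF r] b[OF s] by (simp add: field_simps)
      finally show "dist (g r) (g s) \<le> 1 / Suc k" .
      show "q \<le> Im (g r)" using b[OF r] by simp
    qed
    then show ?thesis ..
  qed
  with q show "\<exists>q\<in>\<rat>. y < q \<and> (\<forall>k. \<exists>n. ?close q k n)" by blast
next
  assume "\<exists>q\<in>\<rat>. y < q \<and> (\<forall>k. \<exists>n. ?close q k n)"
  then obtain q where q: "y < q" and close: "\<And>k. \<exists>n. ?close q k n" by blast
  have at_left: "eventually (\<lambda>r. r \<in> {1 - 1 / Suc n<..<1}) (at_left (1::real))" for n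
    by (rule eventually_at_left_real) simp
  have "cauchy_filter (filtermap g (at_left 1))"
    unfolding cauchy_filter_metric_filtermap
  proof (intro allI impI)
    fix e :: real assume "0 < e"
    then obtain k where k: "inverse (Suc k) < e" using reals_Archimedean by blast
    obtain n where close_n: "?close q k n" using close by blast
    show "\<exists>P. eventually P (at_left 1) \<and> (\<forall>r s. P r \<and> P s \<longrightarrow> dist (g r) (g s) < e)"
    proof (intro exI conjI allI impI)
      show "eventually (\<lambda>r. r \<in> {1 - 1 / Suc n<..<1}) (at_left 1)" by (rule at_left)
      fix r s assume "r \<in> {1 - 1 / Suc n<..<1} \<and> s \<in> {1 - 1 / Suc n<..<1}"
      then have "dist (g r) (g s) \<le> 1 / Suc k" using close_n by blast
      with k show "dist (g r) (g s) < e" by (simp add: inverse_eq_divide)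
    qed
  qed
  moreover have "filtermap g (at_left 1) \<noteq> bot"
    by (simp add: filtermap_bot_iff trivial_limit_at_left_real)
  ultimately obtain L where "filtermap g (at_left 1) \<le> nhds L"
    using cauchy_filter_complete_converges[OF _ complete_UNIV] by (metis principal_UNIV top_greatest)
  then have lim: "(g \<longlongrightarrow> L) (at_left 1)" by (simp add: filterlim_def)
  obtain n where "?close q 0 n" using close by blast
  then have "eventually (\<lambda>r. q \<le> Im (g r)) (at_left 1)"
    using at_left[of n] by (auto elim: eventually_mono)
  then have "q \<le> Im L" by (rule tendsto_lowerbound[OF tendsto_Im[OF lim]]) simp
  with lim q show ?lim by auto
qed

lemma radial_sup_set_sets_lebesgue:
  assumes cont: "continuous_on (ball 0 1) f"
  shows "radial_sup_set f y \<in> sets lebesgue"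
proof -
  define B where "B q k n = (\<Inter>r\<in>{1 - 1 / Suc n<..<1}. \<Inter>s\<in>{1 - 1 / Suc n<..<1}.
      {t. dist (f (of_real r * cis t)) (f (of_real s * cis t)) \<le> 1 / Suc k
          \<and> q \<le> Im (f (of_real r * cis t))})" for q :: real and k n :: nat
  have "closed (B q k n)" for q k n
  proof -
    have circle: "continuous_on UNIV (\<lambda>t. f (of_real r * cis t))" if "r \<in> {1 - 1 / Suc n<..<1}" for r
    proof -
      have "0 \<le> 1 - 1 / real (Suc n)" by (simp add: field_simps)
      with that have "0 < r" "r < 1" unfolding greaterThanLessThan_iff by linarith+
      then show ?thesis
        by (intro continuous_on_compose2[OF cont]) (auto intro!: continuous_intros simp: norm_mult)
    qed
    show ?thesis
      unfolding B_def by (intro closed_INT ballI closed_Collect_conj closed_Collect_le continuous_intros circle)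
  qed
  then have "B q k n \<in> sets lebesgue" for q k n
    by (metis borel_closed sets_completionI_sets sets_lborel)
  then have "(\<Inter>k. \<Union>n. B q k n) \<in> sets lebesgue" for q
    by (intro sets.countable_INT sets.countable_UN) auto
  then have "(\<Union>q\<in>\<rat> \<inter> {y<..}. \<Inter>k. \<Union>n. B q k n) \<in> sets lebesgue"
    by (intro sets.countable_UN'' countable_Int1 countable_rat) auto
  then have "{0..<2*pi} \<inter> (\<Union>q\<in>\<rat> \<inter> {y<..}. \<Inter>k. \<Union>n. B q k n) \<in> sets lebesgue"
    by (intro sets.Int) auto
  also have "{0..<2*pi} \<inter> (\<Union>q\<in>\<rat> \<inter> {y<..}. \<Inter>k. \<Union>n. B q k n) = radial_sup_set f y"
    unfolding radial_sup_set_def has_radial_limit_def tendsto_at_left_one_Im_gt_iff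
    by (intro set_eqI) (simp add: B_def Bex_def conj_assoc)
  finally show ?thesis .
qed

lemma cayley_exp_not_nonpos_Reals:
  assumes y: "\<alpha> + 1 \<le> y" and u: "(0 < Re u \<and> Re u < pi) \<or> Im u < \<alpha>"
  shows "exp (- (\<i> * u)) \<noteq> of_real (exp y)"
    and "cayley (exp y) (exp (- (\<i> * u))) \<notin> \<real>\<^sub>\<le>\<^sub>0"
proof -
  have "exp (- (\<i> * u)) \<noteq> of_real (exp y) \<and> cayley (exp y) (exp (- (\<i> * u))) \<notin> \<real>\<^sub>\<le>\<^sub>0"
    using u
  proof
    assume "0 < Re u \<and> Re u < pi"
    then show ?thesis
      using Im_exp_minus_i_mult_neg[of u] strip_weight_strip(1)[of u y]
      by (auto simp: complex_nonpos_Reals_iff)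
  next
    assume "Im u < \<alpha>"
    then have "cmod (exp (- (\<i> * u))) < exp y"
      using y by (simp add: norm_exp_minus_i_mult)
    then have "exp (- (\<i> * u)) \<noteq> of_real (exp y)"
      by (metis abs_exp_cancel norm_of_real order_less_irrefl)
    then show ?thesis
      using strip_weight_below(1)[OF y \<open>Im u < \<alpha>\<close>] by (auto simp: complex_nonpos_Reals_iff)
  qed
  then show "exp (- (\<i> * u)) \<noteq> of_real (exp y)" "cayley (exp y) (exp (- (\<i> * u))) \<notin> \<real>\<^sub>\<le>\<^sub>0"
    by auto
qed

lemma holomorphic_strip_weight_comp:
  assumes hol: "f holomorphic_on ball 0 1"
    and img: "f ` ball 0 1 \<subseteq> {z. 0 < Re z \<and> Re z < pi} \<union> {z. Im z < \<alpha>}"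
    and y: "\<alpha> + 1 \<le> y"
  shows "(\<lambda>z. \<i> * Ln (cayley (exp y) (exp (- (\<i> * f z)))) / pi) holomorphic_on ball 0 1"
proof -
  have region: "(0 < Re (f z) \<and> Re (f z) < pi) \<or> Im (f z) < \<alpha>" if "z \<in> ball 0 1" for z
    using img that by blast
  have "of_real (exp y) - exp (- (\<i> * f z)) \<noteq> 0" if "z \<in> ball 0 1" for z
    using cayley_exp_not_nonpos_Reals(1)[OF y region[OF that]] by simp
  then have "(\<lambda>z. cayley (exp y) (exp (- (\<i> * f z)))) holomorphic_on ball 0 1"
    unfolding cayley_def by (intro holomorphic_intros hol)
  then have "(\<lambda>z. Ln (cayley (exp y) (exp (- (\<i> * f z))))) holomorphic_on ball 0 1"
    using cayley_exp_not_nonpos_Reals(2)[OF y region] by (rule holomorphic_on_Ln'[rotated])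
  then show ?thesis
    by (intro holomorphic_on_divide holomorphic_on_mult holomorphic_on_const) auto
qed

lemma radial_sup_set_measure_le:
  fixes f :: "complex \<Rightarrow> complex"
  assumes hol: "f holomorphic_on ball 0 1" and f0: "Im (f 0) < \<alpha>"
    and img: "f ` ball 0 1 \<subseteq> {z. 0 < Re z \<and> Re z < pi} \<union> {z. Im z < \<alpha>}"
    and y: "\<alpha> + 1 \<le> y"
  shows "measure lebesgue (radial_sup_set f y) \<le> 16 * pi * exp (\<alpha> - y)"
proof -
  define c where "c = 2 * exp (\<alpha> - y)"
  have c: "0 \<le> c" unfolding c_def by simp
  define G where "G z = \<i> * Ln (cayley (exp y) (exp (- (\<i> * f z)))) / pi + c" for z
  have region: "(0 < Re (f z) \<and> Re (f z) < pi) \<or> Im (f z) < \<alpha>" if "z \<in> ball 0 1" for z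
    using img that by blast
  have Re_G: "Re (G z) = strip_weight y (f z) + c" for z
    by (simp add: G_def strip_weight_def)
  have G_hol: "G holomorphic_on ball 0 1"
    unfolding G_def by (intro holomorphic_on_add holomorphic_strip_weight_comp[OF hol img y] holomorphic_on_const)
  have G_nonneg: "0 \<le> Re (G z)" if "z \<in> ball 0 1" for z
    using region[OF that] strip_weight_strip(2)[of "f z" y] strip_weight_below(2)[OF y, of "f z"]
    unfolding Re_G c_def by force
  have G0: "Re (G 0) \<le> 2 * c"
    using strip_weight_below(2)[OF y f0] unfolding Re_G c_def by linarith
  have on_circle: "of_real r * cis t \<in> ball 0 1" if "0 < r" "r < 1" for r t
    using that by (simp add: norm_mult)
  define S where "S r = {t\<in>{0..2*pi}. 1/2 \<le> Re (G (of_real r * cis t))}" for r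
  have S: "S r \<in> lmeasurable" "measure lebesgue (S r) \<le> 8 * pi * c" if "0 < r" "r < 1" for r
  proof -
    note markov = circle_superlevel_measure_le[OF G_hol that G_nonneg[OF on_circle[OF that]], of "1/2"]
    show "S r \<in> lmeasurable" unfolding S_def using markov(1) by simp
    have "measure lebesgue (S r) \<le> 4 * pi * Re (G 0)" unfolding S_def using markov(2) by simp
    also have "\<dots> \<le> 8 * pi * c" using G0 by simp
    finally show "measure lebesgue (S r) \<le> 8 * pi * c" .
  qed
  define \<rho> where "\<rho> m = 1 - inverse (real (Suc (Suc m)))" for m
  have \<rho>: "0 < \<rho> m" "\<rho> m < 1" for m
    unfolding \<rho>_def by (auto simp: inverse_less_1_iff)
  have "\<rho> \<longlonglongrightarrow> 1"
    unfolding \<rho>_def using LIMSEQ_Suc[OF LIMSEQ_inverse_real_of_nat_add_minus[of 1]] by simp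
  then have \<rho>_lim: "filterlim \<rho> (at_left 1) sequentially"
    using \<rho> by (intro tendsto_imp_filterlim_at_left) auto
  have "measure lebesgue (radial_sup_set f y) \<le> 8 * pi * c"
  proof (rule measure_le_if_eventually_mem[where S="\<lambda>m. S (\<rho> m)"])
    show "radial_sup_set f y \<in> sets lebesgue"
      using radial_sup_set_sets_lebesgue holomorphic_on_imp_continuous_on[OF hol] .
    fix t assume "t \<in> radial_sup_set f y"
    then obtain L where t: "t \<in> {0..<2*pi}" and L: "y < Im L"
      and lim: "((\<lambda>r. f (of_real r * cis t)) \<longlongrightarrow> L) (at_left 1)"
      unfolding radial_sup_set_def has_radial_limit_def by auto
    have "eventually (\<lambda>r. y < Im (f (of_real r * cis t))) (at_left 1)"
      using order_tendstoD(1)[OF tendsto_Im[OF lim] L] .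
    moreover have "eventually (\<lambda>r. r \<in> {0<..<1}) (at_left (1::real))"
      by (rule eventually_at_left_real) simp
    ultimately have "eventually (\<lambda>r. t \<in> S r) (at_left 1)"
    proof eventually_elim
      case (elim r)
      then have "f (of_real r * cis t) \<in> f ` ball 0 1" using on_circle by auto
      with img elim y have "0 < Re (f (of_real r * cis t)) \<and> Re (f (of_real r * cis t)) < pi"
        by auto
      then have "1/2 < strip_weight y (f (of_real r * cis t))"
        using strip_weight_strip(3) elim by blast
      then show ?case using t c unfolding S_def Re_G by auto
    qed
    then show "eventually (\<lambda>m. t \<in> S (\<rho> m)) sequentially"
      by (rule eventually_compose_filterlim[OF _ \<rho>_lim])
  qed (use S \<rho> in auto)
  then show ?thesis unfolding c_def by simp
qed

theorem lemma3p3: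
  "\<exists>C::real. C > 0 \<and>
     (\<forall>(f::complex \<Rightarrow> complex) (\<alpha>::real).
        f holomorphic_on ball 0 1 \<longrightarrow>
        Im (f 0) < \<alpha> \<longrightarrow>
        f ` ball 0 1 \<subseteq> {z. 0 < Re z \<and> Re z < pi} \<union> {z. Im z < \<alpha>} \<longrightarrow>
        (\<forall>y::real. y \<ge> \<alpha> \<longrightarrow>
           radial_sup_set f y \<in> sets lebesgue \<and>
           circle_measure (radial_sup_set f y) \<le> C * exp (\<alpha> - y)))"
proof (intro exI[of _ 8] conjI allI impI)
  show "(0::real) < 8" by simp
  fix f :: "complex \<Rightarrow> complex" and \<alpha> y :: real
  assume hol: "f holomorphic_on ball 0 1" and f0: "Im (f 0) < \<alpha>"
    and img: "f ` ball 0 1 \<subseteq> {z. 0 < Re z \<and> Re z < pi} \<union> {z. Im z < \<alpha>}"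
    and "\<alpha> \<le> y"
  show E: "radial_sup_set f y \<in> sets lebesgue"
    using radial_sup_set_sets_lebesgue holomorphic_on_imp_continuous_on[OF hol] .
  show "circle_measure (radial_sup_set f y) \<le> 8 * exp (\<alpha> - y)"
  proof (cases "\<alpha> + 1 \<le> y")
    case True
    then show ?thesis
      using radial_sup_set_measure_le[OF hol f0 img True]
      unfolding circle_measure_def by (simp add: field_simps)
  next
    case False
    have "measure lebesgue (radial_sup_set f y) \<le> measure lebesgue {0..2*pi}"
      using E by (intro measure_mono_fmeasurable) (auto simp: radial_sup_set_def)
    then have "circle_measure (radial_sup_set f y) \<le> 1"
      unfolding circle_measure_def by simp
    also have "1 \<le> 8 * exp (-1::real)"
      using e_less_272 by (simp add: exp_minus field_simps)
    also have "\<dots> \<le> 8 * exp (\<alpha> - y)"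
      using False by simp
    finally show ?thesis .
  qed
qed

end
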